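(* Let $\ell\ge 3$ be a fixed integer. For a positive integer $k$, let $G_{\ell,k}$ be the graph constructed as follows: take disjoint paths $x_{0,r}x_{1,r}\cdots x_{\ell,r}$ for $1\le r\le k$, identify $x_{0,1},\dots,x_{0,k}$ into a single vertex $u$, identify $x_{\ell,1},\dots,x_{\ell,k}$ into a single vertex $v$, and add the edge $uv$. Take $u$ as the special vertex. Then for every $k$ sufficiently large and every $1\le r\le k$, the spectral path from $x_{\ell-1,r}$ to $u$ in $G_{\ell,k}$ has length $\ell-1$, while the distance between $x_{\ell-1,r}$ and $u$ is $2$.
   Context: For a finite connected graph $G$ with Laplacian $L=D-A$ and special vertex $s$ such that $G-s$ is connected, let $L_s$ be $L$ with row and column $s$ deleted, and let $f_s$ be an eigenvector of $L_s$ for its smallest eigenvalue, chosen positive on $V\setminus\{s\}$ (possible by a result of Steinerberger), extended by $f_s(s)=0$. Every vertex $x\ne s$ has a neighbor with strictly smaller $f_s$-value. The spectral tree $T_s$ is formed by joining each vertex $x\neq s$ to a neighbor minimizing $f_s$ (ties broken arbitrarily); the spectral path from $x$ to $s$ is the unique path from $x$ to $s$ in $T_s$. Length of a path is its number of edges. *)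

theory Defs
  imports Complex_Main
begin

text \<open>Graphs are given by a vertex set V and a symmetric irreflexive adjacency relation E.\<close>

definition degree :: "'a set \<Rightarrow> ('a \<Rightarrow> 'a \<Rightarrow> bool) \<Rightarrow> 'a \<Rightarrow> nat" where
  "degree V E x = card {y \<in> V. E x y}"

text \<open>The reduced Laplacian L_s = (D - A) with row and column s deleted, acting on
  functions on V - {s}: (L_s g)(x) = deg(x) g(x) - sum of g(y) over neighbours y of x, y \<noteq> s.\<close>
definition red_laplacian :: "'a set \<Rightarrow> ('a \<Rightarrow> 'a \<Rightarrow> bool) \<Rightarrow> 'a \<Rightarrow> ('a \<Rightarrow> real) \<Rightarrow> 'a \<Rightarrow> real" where
  "red_laplacian V E s g x =
     real (degree V E x) * g x - (\<Sum>y \<in> {y \<in> V - {s}. E x y}. g y)"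

definition is_red_eigenpair :: "'a set \<Rightarrow> ('a \<Rightarrow> 'a \<Rightarrow> bool) \<Rightarrow> 'a \<Rightarrow> real \<Rightarrow> ('a \<Rightarrow> real) \<Rightarrow> bool" where
  "is_red_eigenpair V E s lam g \<longleftrightarrow>
     (\<exists>x \<in> V - {s}. g x \<noteq> 0) \<and> (\<forall>x \<in> V - {s}. red_laplacian V E s g x = lam * g x)"

definition spectral_vector :: "'a set \<Rightarrow> ('a \<Rightarrow> 'a \<Rightarrow> bool) \<Rightarrow> 'a \<Rightarrow> ('a \<Rightarrow> real) \<Rightarrow> bool" where
  "spectral_vector V E s f \<longleftrightarrow>
     (\<exists>lam. is_red_eigenpair V E s lam f \<and>
            (\<forall>mu h. is_red_eigenpair V E s mu h \<longrightarrow> lam \<le> mu)) \<and>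
     (\<forall>x \<in> V - {s}. f x > 0) \<and> f s = 0"

text \<open>A parent map of a spectral tree T_s: every x \<noteq> s is joined to a neighbour minimizing f
  (ties broken arbitrarily).\<close>
definition spectral_parent :: "'a set \<Rightarrow> ('a \<Rightarrow> 'a \<Rightarrow> bool) \<Rightarrow> 'a \<Rightarrow> ('a \<Rightarrow> real) \<Rightarrow> ('a \<Rightarrow> 'a) \<Rightarrow> bool" where
  "spectral_parent V E s f p \<longleftrightarrow>
     (\<forall>x \<in> V - {s}. p x \<in> V \<and> E x (p x) \<and> (\<forall>y \<in> V. E x y \<longrightarrow> f (p x) \<le> f y))"

text \<open>The spectral path from x to s is the unique tree path, i.e. the chain x, p x, p (p x), ...
  until s is reached; its length is the number of edges.\<close>
definition spectral_path_length :: "'a \<Rightarrow> ('a \<Rightarrow> 'a) \<Rightarrow> 'a \<Rightarrow> nat" where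
  "spectral_path_length s p x = (LEAST n. (p ^^ n) x = s)"

definition is_walk :: "'a set \<Rightarrow> ('a \<Rightarrow> 'a \<Rightarrow> bool) \<Rightarrow> 'a list \<Rightarrow> bool" where
  "is_walk V E ws \<longleftrightarrow> ws \<noteq> [] \<and> set ws \<subseteq> V \<and>
     (\<forall>i. Suc i < length ws \<longrightarrow> E (ws ! i) (ws ! Suc i))"

definition graph_dist :: "'a set \<Rightarrow> ('a \<Rightarrow> 'a \<Rightarrow> bool) \<Rightarrow> 'a \<Rightarrow> 'a \<Rightarrow> nat" where
  "graph_dist V E x y =
     (LEAST n. \<exists>ws. is_walk V E ws \<and> hd ws = x \<and> last ws = y \<and> length ws = Suc n)"

text \<open>Vertices are pairs of naturals: u = (0,0), v = (l,0), and x_{i,r} = (i,r) for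
  1 \<le> i \<le> l-1, 1 \<le> r \<le> k.  gvert l i r is the vertex x_{i,r} after identification.\<close>
definition gvert :: "nat \<Rightarrow> nat \<Rightarrow> nat \<Rightarrow> nat \<times> nat" where
  "gvert l i r = (if i = 0 then (0, 0) else if i = l then (l, 0) else (i, r))"

definition G_V :: "nat \<Rightarrow> nat \<Rightarrow> (nat \<times> nat) set" where
  "G_V l k = {(0, 0), (l, 0)} \<union> {(i, r). 1 \<le> i \<and> i \<le> l - 1 \<and> 1 \<le> r \<and> r \<le> k}"

definition G_E :: "nat \<Rightarrow> nat \<Rightarrow> nat \<times> nat \<Rightarrow> nat \<times> nat \<Rightarrow> bool" where
  "G_E l k a b \<longleftrightarrow>
     (\<exists>i r. 1 \<le> r \<and> r \<le> k \<and> i < l \<and>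
        ((a = gvert l i r \<and> b = gvert l (Suc i) r) \<or> (b = gvert l i r \<and> a = gvert l (Suc i) r)))
     \<or> (a = (0, 0) \<and> b = (l, 0)) \<or> (a = (l, 0) \<and> b = (0, 0))"

end

theory Submission
  imports Defs
begin

(* Along an arm u = x_{0,r}, ..., x_{l,r} = v the eigenvector equation is the three-term
   recurrence of a path, so f(x_{i,r}) = f(x_{1,r}) S(i) with S(i) = U_{i-1}(1 - lambda/2).
   At v, which has k + 1 neighbours, it reads (k + 1 - lambda) S(l) = k S(l - 1); for
   k > 2 l^2 this forces S(i - 1) < S(i + 1) for 1 <= i <= l - 1, because the two-step gap
   S(i + 1) - S(i - 1) decreases in i and is positive at i = l - 1.  So the minimising
   neighbour of x_{i,r} is x_{i-1,r} and the spectral path runs down the whole arm, whereas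
   x_{l-1,r}, v, u is a path of length 2. *)

lemma red_laplacian_root_zero:
  assumes "finite V" "f s = 0"
  shows "red_laplacian V E s f x = real (degree V E x) * f x - (\<Sum>y\<in>{y\<in>V. E x y}. f y)"
proof -
  have "(\<Sum>y\<in>{y\<in>V - {s}. E x y}. f y) = (\<Sum>y\<in>{y\<in>V. E x y}. f y)"
    by (rule sum.mono_neutral_left) (use assms in auto)
  then show ?thesis by (simp add: red_laplacian_def)
qed

lemma red_laplacian_two_neighbours:
  assumes "finite V" "f s = 0" "{y\<in>V. E x y} = {a, b}" "a \<noteq> b"
  shows "red_laplacian V E s f x = 2 * f x - f a - f b"
  using red_laplacian_root_zero[of V f s E x] assms by (simp add: degree_def)

lemma spectral_parent_eqI:
  assumes "spectral_parent V E s f p" "x \<in> V - {s}" "a \<in> V" "E x a"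
    and "\<And>y. y \<in> V \<Longrightarrow> E x y \<Longrightarrow> y \<noteq> a \<Longrightarrow> f a < f y"
  shows "p x = a"
proof -
  have "p x \<in> V" "E x (p x)" "f (p x) \<le> f a"
    using assms(1-4) unfolding spectral_parent_def by blast+
  then show ?thesis using assms(5) by force
qed

lemma spectral_path_length_eqI:
  assumes "(p ^^ n) x = s" "\<And>j. j < n \<Longrightarrow> (p ^^ j) x \<noteq> s"
  shows "spectral_path_length s p x = n"
  unfolding spectral_path_length_def using assms by (intro Least_equality) (auto simp: not_less[symmetric])

lemma graph_dist_eq_2:
  assumes "x \<in> V" "y \<in> V" "z \<in> V" "E x y" "E y z" "x \<noteq> z" "\<not> E x z"
  shows "graph_dist V E x z = 2"
  unfolding graph_dist_def
proof (rule Least_equality)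
  have "is_walk V E [x, y, z]"
    using assms(1-5) by (auto simp: is_walk_def less_Suc_eq nth_Cons')
  then show "\<exists>ws. is_walk V E ws \<and> hd ws = x \<and> last ws = z \<and> length ws = Suc 2"
    by force
next
  fix n assume "\<exists>ws. is_walk V E ws \<and> hd ws = x \<and> last ws = z \<and> length ws = Suc n"
  then obtain ws where ws: "is_walk V E ws" "hd ws = x" "last ws = z" "length ws = Suc n"
    by blast
  show "2 \<le> n"
  proof (rule ccontr)
    assume "\<not> 2 \<le> n"
    then have "n = 0 \<or> n = 1" by auto
    then consider a where "ws = [a]" | a b where "ws = [a, b]"
      using ws(4) by (auto simp: length_Suc_conv)
    then show False
    proof cases
      case 1
      then show False using ws(2,3) assms(6) by simp
    next
      case 2
      then show False using ws(1-3) assms(7) unfolding is_walk_def by force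
    qed
  qed
qed

(* path_eigen lam n = U_{n-1}(1 - lam/2) (Chebyshev, second kind) is the value at vertex n of
   the lam-eigenfunction of a path Laplacian that is 0 at vertex 0 and 1 at vertex 1. *)
fun path_eigen :: "real \<Rightarrow> nat \<Rightarrow> real" where
  "path_eigen lam 0 = 0"
| "path_eigen lam (Suc 0) = 1"
| "path_eigen lam (Suc (Suc n)) = (2 - lam) * path_eigen lam (Suc n) - path_eigen lam n"

lemma path_eigen_rec:
  "1 \<le> i \<Longrightarrow> path_eigen lam (Suc i) = (2 - lam) * path_eigen lam i - path_eigen lam (i - 1)"
  by (cases i) auto

lemma path_eigen_unique:
  fixes F :: "nat \<Rightarrow> real"
  assumes "F 0 = 0"
    and rec: "\<And>i. 1 \<le> i \<Longrightarrow> i < l \<Longrightarrow> F (Suc i) = (2 - lam) * F i - F (i - 1)"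
  shows "n \<le> l \<Longrightarrow> F n = F 1 * path_eigen lam n"
proof (induction n rule: less_induct)
  case (less n)
  consider "n = 0" | "n = 1" | m where "n = Suc (Suc m)"
    by (metis One_nat_def not0_implies_Suc)
  then show ?case
  proof cases
    case 3
    have "F m = F 1 * path_eigen lam m" "F (Suc m) = F 1 * path_eigen lam (Suc m)"
      using less.IH[of m] less.IH[of "Suc m"] less.prems 3 by simp_all
    with rec[of "Suc m"] less.prems 3 show ?thesis by (simp add: algebra_simps)
  qed (use \<open>F 0 = 0\<close> in simp_all)
qed

lemma path_eigen_succ_minus:
  "path_eigen lam (Suc n) - path_eigen lam n = 1 - lam * (\<Sum>j\<le>n. path_eigen lam j)"
  by (induction n) (simp_all add: algebra_simps)

lemma path_eigen_le:
  assumes "0 \<le> lam" and "\<And>j. j \<le> n \<Longrightarrow> 0 \<le> path_eigen lam j"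
  shows "path_eigen lam n \<le> n"
  using assms(2)
proof (induction n)
  case (Suc n)
  have "0 \<le> lam * (\<Sum>j\<le>n. path_eigen lam j)"
    using assms(1) Suc.prems by (intro mult_nonneg_nonneg sum_nonneg) auto
  with path_eigen_succ_minus[of lam n] Suc show ?case by simp
qed simp

lemma sum_path_eigen_le:
  assumes "0 \<le> lam" and "\<And>j. j \<le> n \<Longrightarrow> 0 \<le> path_eigen lam j"
  shows "(\<Sum>j\<le>n. path_eigen lam j) \<le> (real (Suc n))\<^sup>2"
proof -
  have "(\<Sum>j\<le>n. path_eigen lam j) \<le> (\<Sum>j\<le>n. real (Suc n))"
  proof (rule sum_mono)
    fix j assume "j \<in> {..n}"
    then have "path_eigen lam j \<le> j" using path_eigen_le[OF assms(1), of j] assms(2) by simp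
    with \<open>j \<in> {..n}\<close> show "path_eigen lam j \<le> real (Suc n)" by simp
  qed
  then show ?thesis by (simp add: power2_eq_square)
qed

lemma path_eigen_gap_Suc:
  "1 \<le> i \<Longrightarrow> path_eigen lam (Suc (Suc i)) - path_eigen lam i =
     path_eigen lam (Suc i) - path_eigen lam (i - 1) - lam * (path_eigen lam (Suc i) + path_eigen lam i)"
  using path_eigen_rec[of i lam] by (simp add: algebra_simps)

lemma path_eigen_top_gap:
  fixes k :: real
  assumes "1 \<le> m" and eq: "(k + 1 - lam) * path_eigen lam (Suc m) = k * path_eigen lam m"
  shows "k * (path_eigen lam (Suc m) - path_eigen lam (m - 1))
    = (lam * (k + 3 - lam) - 2) * path_eigen lam (Suc m)"
proof -
  let ?S = "path_eigen lam"
  have "k * ?S (m - 1) = k * ((2 - lam) * ?S m - ?S (Suc m))"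
    using path_eigen_rec[OF \<open>1 \<le> m\<close>, of lam] by simp
  also have "\<dots> = (2 - lam) * (k * ?S m) - k * ?S (Suc m)"
    by (simp add: algebra_simps)
  also have "\<dots> = ((2 - lam) * (k + 1 - lam) - k) * ?S (Suc m)"
    unfolding eq[symmetric] by (simp add: algebra_simps)
  finally show ?thesis
    unfolding right_diff_distrib by (simp add: algebra_simps)
qed

lemma path_eigen_eigenvalue_bounds:
  fixes k :: real
  assumes "1 \<le> m"
    and pos: "\<And>j. 1 \<le> j \<Longrightarrow> j \<le> Suc m \<Longrightarrow> 0 < path_eigen lam j"
    and k: "2 * (real (Suc m))\<^sup>2 < k"
    and eq: "(k + 1 - lam) * path_eigen lam (Suc m) = k * path_eigen lam m"
  shows "0 < lam" and "2 < lam * (k + 3 - lam)"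
proof -
  let ?S = "path_eigen lam"
  have "0 < k" using k by (smt (verit) zero_le_power2)
  have top: "0 < ?S (Suc m)" "0 < ?S m" using pos \<open>1 \<le> m\<close> by auto
  have "lam < k + 1"
  proof -
    have "0 < (k + 1 - lam) * ?S (Suc m)" using eq \<open>0 < k\<close> top by simp
    with top show ?thesis by (simp add: zero_less_mult_iff)
  qed
  have "0 < lam \<and> 2 < lam * (k + 3 - lam)"
  proof (cases "1 \<le> lam")
    case True
    have "1 * 2 < lam * (k + 3 - lam)"
      using True \<open>lam < k + 1\<close> by (intro mult_le_less_imp_less) auto
    with True show ?thesis by simp
  next
    case False
    (* Then ?S decreases at the top of the arm, which bounds lam below by 1 / (m + 1)^2. *)
    have nonneg: "0 \<le> ?S j" if "j \<le> m" for j
      using pos[of j] that by (cases j) auto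
    have "k * (?S (Suc m) - ?S m) = (lam - 1) * ?S (Suc m)" using eq by (simp add: algebra_simps)
    also have "\<dots> < 0" using False top by (simp add: mult_neg_pos)
    finally have "?S (Suc m) < ?S m" using \<open>0 < k\<close> by (simp add: mult_less_0_iff)
    then have sum_gt: "1 < lam * (\<Sum>j\<le>m. ?S j)" using path_eigen_succ_minus[of lam m] by linarith
    moreover have "0 \<le> (\<Sum>j\<le>m. ?S j)" using nonneg by (intro sum_nonneg) simp
    ultimately have "0 < lam" by (smt (verit) mult_nonpos_nonneg)
    have "lam * (\<Sum>j\<le>m. ?S j) \<le> lam * (real (Suc m))\<^sup>2"
      using sum_path_eigen_le[of lam m] nonneg \<open>0 < lam\<close> by (simp add: mult_left_mono)
    with sum_gt have "1 < lam * (real (Suc m))\<^sup>2" by linarith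
    moreover have "lam * (2 * (real (Suc m))\<^sup>2) < lam * k"
      using k \<open>0 < lam\<close> by (rule mult_strict_left_mono)
    ultimately have "2 < lam * k" by linarith
    moreover have "0 < lam * (3 - lam)" using False \<open>0 < lam\<close> by simp
    moreover have "lam * (k + 3 - lam) = lam * k + lam * (3 - lam)" by (simp add: algebra_simps)
    ultimately show ?thesis using \<open>0 < lam\<close> by linarith
  qed
  then show "0 < lam" "2 < lam * (k + 3 - lam)" by simp_all
qed

lemma path_eigen_top_gap_pos:
  fixes k :: real
  assumes "1 \<le> m"
    and pos: "\<And>j. 1 \<le> j \<Longrightarrow> j \<le> Suc m \<Longrightarrow> 0 < path_eigen lam j"
    and k: "2 * (real (Suc m))\<^sup>2 < k"
    and eq: "(k + 1 - lam) * path_eigen lam (Suc m) = k * path_eigen lam m"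
  shows "path_eigen lam (m - 1) < path_eigen lam (Suc m)"
proof -
  have "0 < (lam * (k + 3 - lam) - 2) * path_eigen lam (Suc m)"
    using path_eigen_eigenvalue_bounds(2)[OF assms] pos[of "Suc m"] by simp
  then have "0 < k * (path_eigen lam (Suc m) - path_eigen lam (m - 1))"
    unfolding path_eigen_top_gap[OF \<open>1 \<le> m\<close> eq] .
  moreover have "0 < k" using k by (smt (verit) zero_le_power2)
  ultimately show ?thesis by (simp add: zero_less_mult_iff)
qed

lemma path_eigen_two_step_less:
  fixes k :: real
  assumes "1 \<le> m"
    and pos: "\<And>j. 1 \<le> j \<Longrightarrow> j \<le> Suc m \<Longrightarrow> 0 < path_eigen lam j"
    and "2 * (real (Suc m))\<^sup>2 < k"
    and "(k + 1 - lam) * path_eigen lam (Suc m) = k * path_eigen lam m"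
    and "1 \<le> i" "i \<le> m"
  shows "path_eigen lam (i - 1) < path_eigen lam (Suc i)"
  using \<open>i \<le> m\<close> \<open>1 \<le> i\<close>
proof (induction i rule: inc_induct)
  case base
  show ?case using path_eigen_top_gap_pos[OF assms(1-4)] .
next
  case (step n)
  have "0 < lam * (path_eigen lam (Suc n) + path_eigen lam n)"
    using path_eigen_eigenvalue_bounds(1)[OF assms(1-4)] pos[of n] pos[of "Suc n"] step.prems step.hyps
    by simp
  with path_eigen_gap_Suc[OF \<open>1 \<le> n\<close>, of lam] step.IH show ?case by simp
qed

lemma gvert_fst: "i \<le> l \<Longrightarrow> fst (gvert l i r) = i"
  by (simp add: gvert_def)

lemma gvert_interior: "1 \<le> i \<Longrightarrow> i < l \<Longrightarrow> gvert l i r = (i, r)"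
  by (simp add: gvert_def)

lemma gvert_last: "gvert l l r = (l, 0)"
  by (simp add: gvert_def)

lemma gvert_in_G_V: "i \<le> l \<Longrightarrow> 1 \<le> r \<Longrightarrow> r \<le> k \<Longrightarrow> gvert l i r \<in> G_V l k"
  by (auto simp: gvert_def G_V_def)

lemma gvert_ne_u: "1 \<le> i \<Longrightarrow> i \<le> l \<Longrightarrow> gvert l i r \<noteq> (0, 0)"
  using gvert_fst[of i l r] by auto

lemma finite_G_V: "finite (G_V l k)"
  by (rule finite_subset[of _ "{0..l} \<times> {0..k}"]) (auto simp: G_V_def)

lemma gvert_eq_interior_iff:
  "1 \<le> i \<Longrightarrow> i < l \<Longrightarrow> j \<le> l \<Longrightarrow> gvert l j r' = (i, r) \<longleftrightarrow> j = i \<and> r' = r"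
  by (auto simp: gvert_def)

lemma G_E_interior_iff:
  assumes "1 \<le> i" "i < l" "1 \<le> r" "r \<le> k"
  shows "G_E l k (i, r) y \<longleftrightarrow> y = gvert l (i - 1) r \<or> y = gvert l (Suc i) r"
proof
  assume "G_E l k (i, r) y"
  then obtain j r' where "j < l" and
    "((i, r) = gvert l j r' \<and> y = gvert l (Suc j) r') \<or> (y = gvert l j r' \<and> (i, r) = gvert l (Suc j) r')"
    using assms unfolding G_E_def by auto
  then show "y = gvert l (i - 1) r \<or> y = gvert l (Suc i) r"
    using assms gvert_eq_interior_iff[of i l] by (metis Suc_leI diff_Suc_1 less_imp_le)
next
  have "(i, r) = gvert l i r" "(i, r) = gvert l (Suc (i - 1)) r"
    using assms by (simp_all add: gvert_def)
  moreover have "i - 1 < l" using assms by simp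
  ultimately show "y = gvert l (i - 1) r \<or> y = gvert l (Suc i) r \<Longrightarrow> G_E l k (i, r) y"
    using assms unfolding G_E_def by blast
qed

lemma gvert_eq_v_iff: "0 < l \<Longrightarrow> j \<le> l \<Longrightarrow> gvert l j r = (l, 0) \<longleftrightarrow> j = l"
  by (auto simp: gvert_def)

lemma G_E_v_iff:
  assumes "3 \<le> l"
  shows "G_E l k (l, 0) y \<longleftrightarrow> y = (0, 0) \<or> (\<exists>r\<in>{1..k}. y = (l - 1, r))"
proof
  assume "G_E l k (l, 0) y"
  then consider "y = (0, 0)"
    | j r where "j < l" "r \<in> {1..k}" "(l, 0) = gvert l j r"
    | j r where "j < l" "r \<in> {1..k}" "y = gvert l j r" "(l, 0) = gvert l (Suc j) r"
    using assms unfolding G_E_def by auto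
  then show "y = (0, 0) \<or> (\<exists>r\<in>{1..k}. y = (l - 1, r))"
  proof cases
    case 2
    then show ?thesis using gvert_eq_v_iff[of l j r] by simp
  next
    case 3
    then have "Suc j = l" using gvert_eq_v_iff[of l "Suc j" r] by simp
    with 3 assms show ?thesis using gvert_interior[of j l r] by auto
  qed simp
next
  assume "y = (0, 0) \<or> (\<exists>r\<in>{1..k}. y = (l - 1, r))"
  then show "G_E l k (l, 0) y"
  proof
    assume "\<exists>r\<in>{1..k}. y = (l - 1, r)"
    then obtain r where "r \<in> {1..k}" "y = gvert l (l - 1) r" "(l, 0) = gvert l (Suc (l - 1)) r"
      using assms by (auto simp: gvert_def)
    moreover have "l - 1 < l" using assms by simp
    ultimately show ?thesis unfolding G_E_def by (metis atLeastAtMost_iff)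
  qed (simp add: G_E_def)
qed

lemma G_neighbours_interior:
  assumes "1 \<le> i" "i < l" "1 \<le> r" "r \<le> k"
  shows "{y\<in>G_V l k. G_E l k (i, r) y} = {gvert l (i - 1) r, gvert l (Suc i) r}"
  using G_E_interior_iff[OF assms] gvert_in_G_V[of "i - 1" l r k] gvert_in_G_V[of "Suc i" l r k] assms
  by auto

lemma G_neighbours_v:
  assumes "3 \<le> l"
  shows "{y\<in>G_V l k. G_E l k (l, 0) y} = insert (0, 0) ((\<lambda>r. (l - 1, r)) ` {1..k})"
  using G_E_v_iff[OF assms] assms by (auto simp: G_V_def)

lemma G_eigenvector_on_arm:
  assumes eig: "is_red_eigenpair (G_V l k) (G_E l k) (0, 0) lam f" and "f (0, 0) = 0"
    and "1 \<le> r" "r \<le> k" "n \<le> l"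
  shows "f (gvert l n r) = f (gvert l 1 r) * path_eigen lam n"
proof (rule path_eigen_unique[where F = "\<lambda>i. f (gvert l i r)"])
  show "f (gvert l 0 r) = 0" using \<open>f (0, 0) = 0\<close> by (simp add: gvert_def)
next
  fix i assume i: "1 \<le> i" "i < l"
  have "fst (gvert l (i - 1) r) \<noteq> fst (gvert l (Suc i) r)"
    using i by (simp add: gvert_fst)
  then have "gvert l (i - 1) r \<noteq> gvert l (Suc i) r" by metis
  then have "red_laplacian (G_V l k) (G_E l k) (0, 0) f (i, r)
      = 2 * f (i, r) - f (gvert l (i - 1) r) - f (gvert l (Suc i) r)"
    by (intro red_laplacian_two_neighbours finite_G_V \<open>f (0, 0) = 0\<close> G_neighbours_interior)
      (use i assms(3,4) in simp_all)
  moreover have "(i, r) \<in> G_V l k - {(0, 0)}"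
    using gvert_in_G_V[of i l r k] gvert_interior[OF i] i assms(3,4) by auto
  then have "red_laplacian (G_V l k) (G_E l k) (0, 0) f (i, r) = lam * f (i, r)"
    using eig unfolding is_red_eigenpair_def by blast
  ultimately have "2 * f (i, r) - f (gvert l (i - 1) r) - f (gvert l (Suc i) r) = lam * f (i, r)"
    by simp
  then show "f (gvert l (Suc i) r) = (2 - lam) * f (gvert l i r) - f (gvert l (i - 1) r)"
    using gvert_interior[OF i] by (simp add: algebra_simps)
qed (use \<open>n \<le> l\<close> in simp)

lemma G_path_eigen_pos:
  assumes eig: "is_red_eigenpair (G_V l k) (G_E l k) (0, 0) lam f"
    and pos: "\<forall>x\<in>G_V l k - {(0, 0)}. 0 < f x" and "f (0, 0) = 0"
    and "1 \<le> r" "r \<le> k" "1 \<le> i" "i \<le> l"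
  shows "0 < path_eigen lam i"
proof -
  have "0 < f (gvert l i r)" "0 < f (gvert l 1 r)"
    using pos gvert_in_G_V[of _ l r k] gvert_ne_u[of _ l r] assms(4-7) by auto
  with G_eigenvector_on_arm[OF eig \<open>f (0, 0) = 0\<close>, of r i] assms(4-7) show ?thesis
    by (simp add: zero_less_mult_iff)
qed

lemma G_red_laplacian_at_v:
  assumes "3 \<le> l" "f (0, 0) = 0"
  shows "red_laplacian (G_V l k) (G_E l k) (0, 0) f (l, 0)
    = real (Suc k) * f (l, 0) - (\<Sum>r=1..k. f (l - 1, r))"
proof -
  have inj: "inj_on (\<lambda>r. (l - 1, r)) {1..k}" by (simp add: inj_on_def)
  have u_notin: "(0, 0) \<notin> (\<lambda>r. (l - 1, r)) ` {1..k}" using \<open>3 \<le> l\<close> by auto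
  have "degree (G_V l k) (G_E l k) (l, 0) = Suc k"
    unfolding degree_def G_neighbours_v[OF \<open>3 \<le> l\<close>] using inj u_notin by (simp add: card_image)
  moreover have "(\<Sum>y\<in>{y\<in>G_V l k. G_E l k (l, 0) y}. f y) = (\<Sum>r=1..k. f (l - 1, r))"
    unfolding G_neighbours_v[OF \<open>3 \<le> l\<close>] using u_notin inj \<open>f (0, 0) = 0\<close>
    by (simp add: sum.reindex)
  ultimately show ?thesis
    using red_laplacian_root_zero[of "G_V l k" f "(0, 0)" "G_E l k" "(l, 0)"] finite_G_V assms(2)
    by simp
qed

lemma G_eigen_equation_at_v:
  assumes "3 \<le> l" and eig: "is_red_eigenpair (G_V l k) (G_E l k) (0, 0) lam f"
    and pos: "\<forall>x\<in>G_V l k - {(0, 0)}. 0 < f x" and "f (0, 0) = 0"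
  shows "(real k + 1 - lam) * path_eigen lam l = real k * path_eigen lam (l - 1)"
proof -
  let ?S = "path_eigen lam" and ?c = "\<lambda>r. f (gvert l 1 r)"
  define w where "w = f (l, 0)"
  have arm: "f (gvert l n r) = ?c r * ?S n" if "r \<in> {1..k}" "n \<le> l" for r n
    using G_eigenvector_on_arm[OF eig \<open>f (0, 0) = 0\<close>] that by auto
  have w: "w = ?c r * ?S l" if "r \<in> {1..k}" for r
    using arm[OF that, of l] by (simp add: w_def gvert_last)
  have arm_top: "f (l - 1, r) = ?c r * ?S (l - 1)" if "r \<in> {1..k}" for r
    using arm[OF that, of "l - 1"] gvert_interior[of "l - 1" l r] \<open>3 \<le> l\<close> by simp
  have v: "(l, 0) \<in> G_V l k - {(0, 0)}" using \<open>3 \<le> l\<close> by (simp add: G_V_def)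
  then have "0 < w" using pos unfolding w_def by blast
  have "(\<Sum>r=1..k. f (l - 1, r)) = (\<Sum>r=1..k. ?c r) * ?S (l - 1)"
    using arm_top by (simp add: sum_distrib_right)
  moreover have "red_laplacian (G_V l k) (G_E l k) (0, 0) f (l, 0) = lam * w"
    using eig v unfolding is_red_eigenpair_def w_def by blast
  ultimately have "real (Suc k) * w - (\<Sum>r=1..k. ?c r) * ?S (l - 1) = lam * w"
    using G_red_laplacian_at_v[of l f k] assms(1,4) unfolding w_def by simp
  then have balance: "(real k + 1 - lam) * w = (\<Sum>r=1..k. ?c r) * ?S (l - 1)"
    by (simp add: algebra_simps)
  have "(\<Sum>r=1..k. ?c r) * ?S l = (\<Sum>r=1..k. w)"
    unfolding sum_distrib_right using w by (intro sum.cong) auto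
  then have total: "(\<Sum>r=1..k. ?c r) * ?S l = real k * w" by simp
  have "w * ((real k + 1 - lam) * ?S l) = ((real k + 1 - lam) * w) * ?S l"
    by (simp add: algebra_simps)
  also have "\<dots> = ?S (l - 1) * ((\<Sum>r=1..k. ?c r) * ?S l)"
    unfolding balance by (simp add: algebra_simps)
  also have "\<dots> = w * (real k * ?S (l - 1))"
    unfolding total by (simp add: algebra_simps)
  finally have "w * ((real k + 1 - lam) * ?S l) = w * (real k * ?S (l - 1))" .
  with \<open>0 < w\<close> show ?thesis by simp
qed

lemma G_spectral_parent_interior:
  assumes "3 \<le> l" "2 * l\<^sup>2 < k"
    and sv: "spectral_vector (G_V l k) (G_E l k) (0, 0) f"
    and sp: "spectral_parent (G_V l k) (G_E l k) (0, 0) f p"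
    and r: "1 \<le> r" "r \<le> k" and i: "1 \<le> i" "i < l"
  shows "p (i, r) = gvert l (i - 1) r"
proof -
  from sv obtain lam where eig: "is_red_eigenpair (G_V l k) (G_E l k) (0, 0) lam f"
    and pos: "\<forall>x\<in>G_V l k - {(0, 0)}. 0 < f x" and "f (0, 0) = 0"
    unfolding spectral_vector_def by blast
  let ?S = "path_eigen lam"
  have "real (2 * l\<^sup>2) < real k" using assms(2) by (simp only: of_nat_less_iff)
  then have "2 * (real (Suc (l - 1)))\<^sup>2 < real k" using assms(1) by simp
  moreover have "(real k + 1 - lam) * ?S (Suc (l - 1)) = real k * ?S (l - 1)"
    using G_eigen_equation_at_v[OF assms(1) eig pos \<open>f (0, 0) = 0\<close>] assms(1) by simp
  moreover have "0 < ?S j" if "1 \<le> j" "j \<le> Suc (l - 1)" for j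
    using G_path_eigen_pos[OF eig pos \<open>f (0, 0) = 0\<close> r] that assms(1) by simp
  ultimately have "?S (i - 1) < ?S (Suc i)"
    using path_eigen_two_step_less[of "l - 1" lam "real k" i] assms(1) i by simp
  moreover have "0 < f (gvert l 1 r)"
    using pos gvert_in_G_V[of 1 l r k] gvert_ne_u[of 1 l r] assms(1) r by auto
  ultimately have less: "f (gvert l (i - 1) r) < f (gvert l (Suc i) r)"
    using G_eigenvector_on_arm[OF eig \<open>f (0, 0) = 0\<close> r, of "i - 1"]
      G_eigenvector_on_arm[OF eig \<open>f (0, 0) = 0\<close> r, of "Suc i"] i by simp
  show ?thesis
  proof (rule spectral_parent_eqI[OF sp])
    show "(i, r) \<in> G_V l k - {(0, 0)}"
      using gvert_in_G_V[of i l r k] gvert_interior[OF i] i r by auto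
    show "gvert l (i - 1) r \<in> G_V l k"
      using gvert_in_G_V[of "i - 1" l r k] i r by simp
    show "G_E l k (i, r) (gvert l (i - 1) r)"
      using G_E_interior_iff[OF i r] by simp
    show "f (gvert l (i - 1) r) < f y"
      if "y \<in> G_V l k" "G_E l k (i, r) y" "y \<noteq> gvert l (i - 1) r" for y
      using that less G_E_interior_iff[OF i r] by auto
  qed
qed

lemma G_spectral_path_length:
  assumes "3 \<le> l" "2 * l\<^sup>2 < k" "1 \<le> r" "r \<le> k"
    and "spectral_vector (G_V l k) (G_E l k) (0, 0) f"
    and "spectral_parent (G_V l k) (G_E l k) (0, 0) f p"
  shows "spectral_path_length (0, 0) p (l - 1, r) = l - 1"
proof -
  have iter: "(p ^^ n) (l - 1, r) = gvert l (l - 1 - n) r" if "n \<le> l - 1" for n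
    using that
  proof (induction n)
    case 0
    then show ?case using gvert_interior[of "l - 1" l r] assms(1) by simp
  next
    case (Suc n)
    have "(p ^^ Suc n) (l - 1, r) = p (l - 1 - n, r)"
      using Suc gvert_interior[of "l - 1 - n" l r] by simp
    also have "\<dots> = gvert l (l - 1 - Suc n) r"
      using G_spectral_parent_interior[OF assms(1,2,5,6,3,4), of "l - 1 - n"] Suc.prems by simp
    finally show ?case .
  qed
  show ?thesis
  proof (rule spectral_path_length_eqI)
    show "(p ^^ (l - 1)) (l - 1, r) = (0, 0)"
      using iter[of "l - 1"] by (simp add: gvert_def)
    show "(p ^^ j) (l - 1, r) \<noteq> (0, 0)" if "j < l - 1" for j
      using iter[of j] gvert_ne_u[of "l - 1 - j" l r] that by simp
  qed
qed

lemma G_graph_dist: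
  assumes "3 \<le> l" "1 \<le> r" "r \<le> k"
  shows "graph_dist (G_V l k) (G_E l k) (l - 1, r) (0, 0) = 2"
proof (rule graph_dist_eq_2)
  have i: "1 \<le> l - 1" "l - 1 < l" using assms(1) by auto
  show "(l - 1, r) \<in> G_V l k" "(l, 0) \<in> G_V l k" "(0, 0) \<in> G_V l k"
    using assms by (auto simp: G_V_def)
  show "G_E l k (l - 1, r) (l, 0)"
    using G_E_interior_iff[OF i assms(2,3)] i by (simp add: gvert_last)
  show "G_E l k (l, 0) (0, 0)" by (simp add: G_E_def)
  show "(l - 1, r) \<noteq> (0, 0)" using assms(1) by simp
  have "gvert l (l - 1 - 1) r \<noteq> (0, 0)"
    using gvert_ne_u[of "l - 1 - 1" l r] assms(1) by simp
  then show "\<not> G_E l k (l - 1, r) (0, 0)"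
    using G_E_interior_iff[OF i assms(2,3)] assms(1) by (auto simp: gvert_last)
qed

theorem theorem17:
  fixes l :: nat
  assumes "l \<ge> 3"
  shows "\<exists>K. \<forall>k \<ge> K. \<forall>r. 1 \<le> r \<and> r \<le> k \<longrightarrow>
           (\<forall>f p. spectral_vector (G_V l k) (G_E l k) (0, 0) f \<and>
                  spectral_parent (G_V l k) (G_E l k) (0, 0) f p \<longrightarrow>
                  spectral_path_length (0, 0) p (l - 1, r) = l - 1) \<and>
           graph_dist (G_V l k) (G_E l k) (l - 1, r) (0, 0) = 2"
proof (intro exI[of _ "2 * l\<^sup>2 + 1"] allI impI conjI)
  fix k r f p
  assume "2 * l\<^sup>2 + 1 \<le> k" "1 \<le> r \<and> r \<le> k"
    and "spectral_vector (G_V l k) (G_E l k) (0, 0) f \<and>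
      spectral_parent (G_V l k) (G_E l k) (0, 0) f p"
  then show "spectral_path_length (0, 0) p (l - 1, r) = l - 1"
    using G_spectral_path_length[of l k r f p] assms by simp
next
  fix k r
  assume "2 * l\<^sup>2 + 1 \<le> k" "1 \<le> r \<and> r \<le> k"
  then show "graph_dist (G_V l k) (G_E l k) (l - 1, r) (0, 0) = 2"
    using G_graph_dist[of l r k] assms by simp
qed

end
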